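(* Let $\mathcal{A}=\{1,\dots,L\}$, let $Q$ be a pmf on $\mathcal{A}$, let $f:\mathcal{A}\to\mathbb{R}$, and fix an integer $n\ge1$. For real $I$, let $\mathcal{S}_I=\{a^n\in\mathcal{A}^n: E_f(\pi(a^n))\le I\}$ and, whenever $Q^n(\mathcal{S}_I)>0$, define the pmf $P_I$ on $\mathcal{A}^n$ by $P_I(a^n)=Q^n(a^n)/Q^n(\mathcal{S}_I)$ for $a^n\in\mathcal{S}_I$ (and $0$ otherwise), and the average empirical pmf $\bar\pi_I=\sum_{a^n\in\mathcal{A}^n}P_I(a^n)\,\pi(a^n)$. Then $E_f(\bar\pi_I)$ is non-decreasing in $I$: for all $I_1\le I_2$ with $Q^n(\mathcal{S}_{I_1})>0$, we have $E_f(\bar\pi_{I_1})\le E_f(\bar\pi_{I_2})$.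
   Context: $Q^n$ is the iid pmf $Q^n(a^n)=\prod_{i=1}^nQ(a_i)$ and $Q^n(\mathcal{S})=\sum_{a^n\in\mathcal{S}}Q^n(a^n)$. For a pmf $P$ on $\mathcal{A}$, $E_f(P)=\sum_aP(a)f(a)$. The empirical pmf (type) of $a^n$ is $\pi(a^n)=\frac1n[n_1,\dots,n_L]$, where $n_i$ is the number of occurrences of letter $i$ in $a^n$; thus $E_f(\pi(a^n))=\frac1n\sum_{i=1}^nf(a_i)$. *)

theory Defs
  imports Complex_Main
begin

definition seqs :: "nat \<Rightarrow> nat \<Rightarrow> nat list set" where
  "seqs L n = {xs. length xs = n \<and> set xs \<subseteq> {1..L}}"

definition is_pmf :: "nat \<Rightarrow> (nat \<Rightarrow> real) \<Rightarrow> bool" where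
  "is_pmf L Q \<longleftrightarrow> (\<forall>a\<in>{1..L}. Q a \<ge> 0) \<and> (\<Sum>a\<in>{1..L}. Q a) = 1"

definition Qn :: "(nat \<Rightarrow> real) \<Rightarrow> nat list \<Rightarrow> real" where
  "Qn Q xs = prod_list (map Q xs)"

definition QnSet :: "(nat \<Rightarrow> real) \<Rightarrow> nat list set \<Rightarrow> real" where
  "QnSet Q S = (\<Sum>xs\<in>S. Qn Q xs)"

definition Ef :: "nat \<Rightarrow> (nat \<Rightarrow> real) \<Rightarrow> (nat \<Rightarrow> real) \<Rightarrow> real" where
  "Ef L f P = (\<Sum>a\<in>{1..L}. P a * f a)"

definition emp :: "nat list \<Rightarrow> nat \<Rightarrow> real" where
  "emp xs a = real (count_list xs a) / real (length xs)"

definition SI :: "nat \<Rightarrow> nat \<Rightarrow> (nat \<Rightarrow> real) \<Rightarrow> real \<Rightarrow> nat list set" where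
  "SI L n f I = {xs \<in> seqs L n. Ef L f (emp xs) \<le> I}"

definition PI :: "nat \<Rightarrow> nat \<Rightarrow> (nat \<Rightarrow> real) \<Rightarrow> (nat \<Rightarrow> real) \<Rightarrow> real \<Rightarrow> nat list \<Rightarrow> real" where
  "PI L n Q f I xs = (if xs \<in> SI L n f I then Qn Q xs / QnSet Q (SI L n f I) else 0)"

definition pibar :: "nat \<Rightarrow> nat \<Rightarrow> (nat \<Rightarrow> real) \<Rightarrow> (nat \<Rightarrow> real) \<Rightarrow> real \<Rightarrow> nat \<Rightarrow> real" where
  "pibar L n Q f I a = (\<Sum>xs\<in>seqs L n. PI L n Q f I xs * emp xs a)"

end

theory Submission
  imports Defs
begin

text \<open>By linearity of \<open>E\<^sub>f\<close>, the quantity \<open>E\<^sub>f(\<pi>\<^sub>I)\<close> of the average type is the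
  \<open>Q\<^sup>n\<close>-weighted mean of \<open>g(a\<^sup>n) = E\<^sub>f(\<pi>(a\<^sup>n))\<close> over the sublevel set \<open>S\<^sub>I = {g \<le> I}\<close>.
  Raising the level from \<open>I\<^sub>1\<close> to \<open>I\<^sub>2\<close> only adds sequences with \<open>g > I\<^sub>1\<close>, whereas the mean
  over \<open>S\<^sub>I\<^sub>1\<close> is at most \<open>I\<^sub>1\<close>; so the mean cannot decrease.\<close>

lemma mediant_ge:
  fixes a b c d :: real
  assumes "b > 0" "d \<ge> 0" "a * d \<le> b * c"
  shows "a / b \<le> (a + c) / (b + d)"
  using assms by (simp add: divide_simps algebra_simps)

lemma weighted_mean_le_weighted_mean_superset:
  fixes w g :: "'a \<Rightarrow> real" and c :: real
  assumes "finite B" "A \<subseteq> B"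
    and w_nonneg: "\<And>x. x \<in> B \<Longrightarrow> w x \<ge> 0"
    and A_pos: "sum w A > 0"
    and below: "\<And>x. x \<in> A \<Longrightarrow> g x \<le> c"
    and above: "\<And>x. x \<in> B - A \<Longrightarrow> c \<le> g x"
  shows "(\<Sum>x\<in>A. w x * g x) / sum w A \<le> (\<Sum>x\<in>B. w x * g x) / sum w B"
proof -
  define D where "D = B - A"
  have split: "sum h B = sum h A + sum h D" for h :: "'a \<Rightarrow> real"
    using assms(1,2) unfolding D_def by (metis sum.subset_diff add.commute)
  have mean_A: "(\<Sum>x\<in>A. w x * g x) \<le> sum w A * c"
    unfolding sum_distrib_right using assms(2) by (intro sum_mono mult_left_mono below w_nonneg) auto
  have mean_D: "sum w D * c \<le> (\<Sum>x\<in>D. w x * g x)"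
    unfolding sum_distrib_right D_def by (intro sum_mono mult_left_mono above w_nonneg) auto
  have D_nonneg: "sum w D \<ge> 0"
    unfolding D_def by (intro sum_nonneg w_nonneg) auto
  have "(\<Sum>x\<in>A. w x * g x) * sum w D \<le> sum w A * (sum w D * c)"
    using mult_right_mono[OF mean_A D_nonneg] by (simp add: algebra_simps)
  also have "\<dots> \<le> sum w A * (\<Sum>x\<in>D. w x * g x)"
    using mean_D A_pos by simp
  finally show ?thesis
    unfolding split[of w] split[of "\<lambda>x. w x * g x"] by (rule mediant_ge[OF A_pos D_nonneg])
qed

lemma finite_seqs: "finite (seqs L n)"
proof -
  have "seqs L n = {xs. set xs \<subseteq> {1..L} \<and> length xs = n}"
    unfolding seqs_def by auto
  then show ?thesis
    using finite_lists_length_eq[of "{1..L}" n] by simp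
qed

lemma SI_subset_seqs: "SI L n f I \<subseteq> seqs L n"
  unfolding SI_def by auto

lemma SI_mono: "I1 \<le> I2 \<Longrightarrow> SI L n f I1 \<subseteq> SI L n f I2"
  unfolding SI_def by auto

lemma Qn_nonneg:
  assumes "is_pmf L Q" "xs \<in> seqs L n"
  shows "Qn Q xs \<ge> 0"
  using assms unfolding Qn_def is_pmf_def seqs_def by (fastforce intro!: prod_list_nonneg)

lemma Ef_mixture: "Ef L f (\<lambda>a. \<Sum>x\<in>S. w x * p x a) = (\<Sum>x\<in>S. w x * Ef L f (p x))"
  unfolding Ef_def by (simp add: sum_distrib_left sum_distrib_right mult.assoc sum.swap[of _ S])

lemma Ef_pibar:
  "Ef L f (pibar L n Q f I) = (\<Sum>xs\<in>SI L n f I. Qn Q xs * Ef L f (emp xs)) / QnSet Q (SI L n f I)"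
proof -
  have "Ef L f (pibar L n Q f I) = (\<Sum>xs\<in>seqs L n. PI L n Q f I xs * Ef L f (emp xs))"
    unfolding pibar_def Ef_mixture ..
  also have "\<dots> = (\<Sum>xs\<in>SI L n f I. Qn Q xs / QnSet Q (SI L n f I) * Ef L f (emp xs))"
    unfolding PI_def using finite_seqs SI_subset_seqs
    by (simp add: if_distrib[of "\<lambda>t. t * _"] sum.If_cases Int_absorb1)
  finally show ?thesis
    by (simp add: sum_divide_distrib)
qed

theorem lemma3:
  fixes L n :: nat and Q f :: "nat \<Rightarrow> real" and I1 I2 :: real
  assumes "is_pmf L Q"
    and "n \<ge> 1"
    and "I1 \<le> I2"
    and "QnSet Q (SI L n f I1) > 0"
  shows "Ef L f (pibar L n Q f I1) \<le> Ef L f (pibar L n Q f I2)"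
  unfolding Ef_pibar QnSet_def
proof (rule weighted_mean_le_weighted_mean_superset[where c = I1])
  show "finite (SI L n f I2)"
    using finite_seqs SI_subset_seqs by (rule finite_subset[rotated])
  show "SI L n f I1 \<subseteq> SI L n f I2"
    using assms(3) by (rule SI_mono)
  show "Qn Q xs \<ge> 0" if "xs \<in> SI L n f I2" for xs
    using assms(1) that SI_subset_seqs by (blast intro: Qn_nonneg)
  show "sum (Qn Q) (SI L n f I1) > 0"
    using assms(4) unfolding QnSet_def .
  show "Ef L f (emp xs) \<le> I1" if "xs \<in> SI L n f I1" for xs
    using that unfolding SI_def by simp
  show "I1 \<le> Ef L f (emp xs)" if "xs \<in> SI L n f I2 - SI L n f I1" for xs
    using that unfolding SI_def by auto
qed

end
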